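(* Let $a\in\mathbb{C}$ be generic and $f(\zeta)=\sum_{w^*\in\mathcal{V}(\Delta^* )}\zeta^{w^*}+a\,\zeta^{0^*}\in\mathbb{C}[\zeta_v:v\in\mathcal{V}(\Delta)]$, and let $J(f)$ be the ideal generated by the partial derivatives $\partial f/\partial\zeta_v$, $v\in\mathcal{V}(\Delta)$. Let $x^*\in L^*$ lie in the relative interior of a facet of $\Delta^*$. Then $$\zeta^{x^*}\equiv\sum\{\mathbb{C}\,\zeta^{v^*}: v^*\in L^*\cap(\partial\Delta^*\setminus\textstyle\bigcup_{F^*\text{ facet of }\Delta^*}\mathrm{Int}(F^* ))\}\pmod{J(f)},$$ i.e. $\zeta^{x^*}$ is congruent modulo $J(f)$ to a $\mathbb{C}$-linear combination of monomials $\zeta^{v^*}$ with $v^*$ lattice points of $\partial\Delta^*$ lying in faces of dimension less than $n-1$.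
   Context: $L$ is a lattice of rank $n$, $L^*$ its dual; $(\Delta,L)$ is a reflexive polytope (an $n$-dimensional lattice polytope with the origin in its interior such that $\Delta^*=\{y\in L^*_{\mathbb{R}}:\langle y,x\rangle\ge-1\ \forall x\in\Delta\}$ is also a lattice polytope). $\mathcal{V}(\Delta)$, $\mathcal{V}(\Delta^* )$ are the vertex sets, $0^*$ is the origin of $L^*$, and $\mathrm{Int}$ denotes relative interior. The variables $\zeta=(\zeta_v)_{v\in\mathcal{V}(\Delta)}$ are homogeneous coordinates of the toric variety defined by the fan of cones over the faces of $\Delta$; for $v^*\in\Delta^*\cap L^*$ the monomial is $\zeta^{v^*}=\prod_{v\in\mathcal{V}(\Delta)}\zeta_v^{\langle v^*,v\rangle+1}$ (exponents are non-negative integers). *)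

theory Defs
  imports "HOL-Analysis.Analysis" "HOL-Library.Poly_Mapping"
begin

text \<open>The lattice L is Z^n inside R^n (type real^'n); the dual lattice L* is identified
with Z^n via the standard inner product.\<close>

definition lattice_pt :: "real^'n \<Rightarrow> bool" where
  "lattice_pt x \<longleftrightarrow> (\<forall>i. x $ i \<in> \<int>)"

definition lattice_polytope :: "(real^'n) set \<Rightarrow> bool" where
  "lattice_polytope P \<longleftrightarrow> (\<exists>S. finite S \<and> (\<forall>x\<in>S. lattice_pt x) \<and> P = convex hull S)"

definition dual_polytope :: "(real^'n) set \<Rightarrow> (real^'n) set" where
  "dual_polytope D = {y. \<forall>x\<in>D. y \<bullet> x \<ge> -1}"

definition reflexive_polytope :: "(real^'n) set \<Rightarrow> bool" where
  "reflexive_polytope D \<longleftrightarrow> lattice_polytope D \<and> 0 \<in> interior D \<and> lattice_polytope (dual_polytope D)"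

definition vertices :: "(real^'n) set \<Rightarrow> (real^'n) set" where
  "vertices P = {v. v extreme_point_of P}"

text \<open>Polynomials in the variables zeta_v (v a vertex of D) with complex coefficients:
finitely supported maps from exponent vectors to coefficients.\<close>

type_synonym 'n zpoly = "((real^'n) \<Rightarrow>\<^sub>0 nat) \<Rightarrow>\<^sub>0 complex"

text \<open>Exponent vector of zeta^y: zeta_v has exponent <y,v> + 1 for each vertex v of D.\<close>
definition expo :: "(real^'n) set \<Rightarrow> real^'n \<Rightarrow> (real^'n) \<Rightarrow>\<^sub>0 nat" where
  "expo D y = Abs_poly_mapping (\<lambda>v. if v \<in> vertices D then nat (\<lfloor>y \<bullet> v\<rfloor> + 1) else 0)"

definition zmono :: "(real^'n) set \<Rightarrow> real^'n \<Rightarrow> 'n zpoly" where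
  "zmono D y = Poly_Mapping.single (expo D y) 1"

definition const_poly :: "complex \<Rightarrow> 'n zpoly" where
  "const_poly c = Poly_Mapping.single 0 c"

definition pderiv_var :: "real^'n \<Rightarrow> 'n zpoly \<Rightarrow> 'n zpoly" where
  "pderiv_var v p = Abs_poly_mapping
     (\<lambda>\<beta> :: (real^'n) \<Rightarrow>\<^sub>0 nat. of_nat (Poly_Mapping.lookup \<beta> v + 1) * Poly_Mapping.lookup p (\<beta> + Poly_Mapping.single v 1))"

definition fpoly :: "(real^'n) set \<Rightarrow> complex \<Rightarrow> 'n zpoly" where
  "fpoly D a = (\<Sum>w\<in>vertices (dual_polytope D). zmono D w) + const_poly a * zmono D 0"

definition in_gen_ideal :: "'i set \<Rightarrow> ('i \<Rightarrow> 'n zpoly) \<Rightarrow> 'n zpoly \<Rightarrow> bool" where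
  "in_gen_ideal I g p \<longleftrightarrow> (\<exists>h. p = (\<Sum>i\<in>I. h i * g i))"

definition jacobian_ideal_mem :: "(real^'n) set \<Rightarrow> complex \<Rightarrow> 'n zpoly \<Rightarrow> bool" where
  "jacobian_ideal_mem D a p \<longleftrightarrow> in_gen_ideal (vertices D) (\<lambda>v. pderiv_var v (fpoly D a)) p"

definition low_boundary_pts :: "(real^'n) set \<Rightarrow> (real^'n) set" where
  "low_boundary_pts D = {y. lattice_pt y \<and> y \<in> frontier (dual_polytope D) \<and>
      (\<forall>F. F facet_of dual_polytope D \<longrightarrow> y \<notin> rel_interior F)}"

end

theory Submission
  imports Defs "Jordan_Normal_Form.Char_Poly"
begin

text \<open>Let P be the set of lattice points of \<open>\<Delta>\<^sup>*\<close>. If \<open>y \<in> P\<close> satisfies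
  \<open>\<langle>y,v\<rangle> = -1\<close> for at most one vertex u of \<open>\<Delta>\<close>, then \<open>\<langle>y,v\<rangle> \<ge> 0\<close> for all other vertices,
  so \<open>\<zeta>\<^sup>y / \<Prod>\<^sub>v\<^sub>\<noteq>\<^sub>u \<zeta>\<^sub>v\<close> is a monomial; multiplying \<open>\<partial>f/\<partial>\<zeta>\<^sub>u\<close> by it gives the element
  \<open>a \<zeta>\<^sup>y + \<Sum>\<^sub>w (\<langle>w,u\<rangle> + 1) \<zeta>\<^sup>y\<^sup>+\<^sup>w\<close> of \<open>J(f)\<close>, and every \<open>y + w\<close> with a nonzero coefficient lies
  in P again. A point of P with two such vertices lies on two distinct supporting hyperplanes,
  hence in a face of codimension at least two. Writing A for the remaining points, the relations
  read \<open>(a I + N) \<zeta>\<^sub>A \<equiv> (terms \<zeta>\<^sup>z, z \<notin> A) mod J(f)\<close> for an integer matrix N, which can be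
  solved for every \<open>\<zeta>\<^sup>x\<close>, \<open>x \<in> A\<close>, unless \<open>-a\<close> is one of the finitely many eigenvalues of N.
  Points in the relative interior of a facet belong to A.\<close>

subsection \<open>Linear algebra\<close>

lemma shifted_matrix_invertible_cofinite:
  fixes A :: "'a set" and N :: "'a \<Rightarrow> 'a \<Rightarrow> complex"
  assumes "finite A"
  shows "\<exists>E. finite E \<and> (\<forall>a. a \<notin> E \<longrightarrow> (\<forall>x\<in>A. \<exists>q. \<forall>z\<in>A.
     (\<Sum>y\<in>A. q y * ((if z = y then a else 0) + N y z)) = (if z = x then 1 else 0)))"
proof -
  obtain xs where xs: "set xs = A" "distinct xs" using finite_distinct_list[OF assms] by blast
  define n where "n = length xs"
  define Nm where "Nm = mat n n (\<lambda>(i,j). N (xs!i) (xs!j))"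
  have Nm: "Nm \<in> carrier_mat n n" by (simp add: Nm_def)
  define E where "E = uminus ` {e. poly (char_poly Nm) e = 0}"
  have "char_poly Nm \<noteq> 0" using degree_monic_char_poly[OF Nm] by auto
  hence "finite E" using poly_roots_finite unfolding E_def by blast
  moreover have "\<forall>a. a \<notin> E \<longrightarrow> (\<forall>x\<in>A. \<exists>q. \<forall>z\<in>A.
     (\<Sum>y\<in>A. q y * ((if z = y then a else 0) + N y z)) = (if z = x then 1 else 0))"
  proof (intro allI impI ballI)
    fix a x assume a: "a \<notin> E" and x: "x \<in> A"
    have "poly (char_poly Nm) (-a) \<noteq> 0"
    proof
      assume "poly (char_poly Nm) (-a) = 0"
      hence "- (-a) \<in> E" unfolding E_def by blast
      thus False using a by simp
    qed
    hence "\<not> eigenvalue Nm (-a)" by (simp add: eigenvalue_root_char_poly[OF Nm])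
    hence det: "det (char_matrix Nm (-a)) \<noteq> 0" using eigenvalue_det[OF Nm] by simp
    define M where "M = char_matrix Nm (-a)"
    have M: "M \<in> carrier_mat n n" using Nm by (simp add: M_def)
    have M_entry: "\<And>i j. i<n \<Longrightarrow> j<n \<Longrightarrow> M $$ (i,j) = (if i = j then a else 0) + N (xs!i) (xs!j)"
      by (simp add: M_def char_matrix_def Nm_def)
    from det_non_zero_imp_unit[OF M det[folded M_def], unfolded Units_def, of "()"]
    obtain Q where Q: "Q \<in> carrier_mat n n" "Q * M = 1\<^sub>m n" by (auto simp: ring_mat_def)
    obtain i where i: "i < n" "xs!i = x" using x xs(1) by (auto simp: in_set_conv_nth n_def)
    define q where "q y = Q $$ (i, SOME j. j < n \<and> xs!j = y)" for y
    show "\<exists>q. \<forall>z\<in>A. (\<Sum>y\<in>A. q y * ((if z = y then a else 0) + N y z)) = (if z = x then 1 else 0)"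
    proof (intro exI ballI)
      fix z assume z: "z \<in> A"
      obtain l where l: "l < n" "xs!l = z" using z xs(1) by (auto simp: in_set_conv_nth n_def)
      have inj: "inj_on ((!) xs) {..<n}" using xs(2) by (simp add: inj_on_def nth_eq_iff_index_eq n_def)
      have A_eq: "A = (!) xs ` {..<n}" using xs(1) by (auto simp: in_set_conv_nth n_def image_def)
      have "(\<Sum>y\<in>A. q y * ((if z = y then a else 0) + N y z))
           = (\<Sum>j<n. Q $$ (i,j) * M $$ (j,l))"
        unfolding A_eq sum.reindex[OF inj]
      proof (rule sum.cong[OF refl], unfold comp_def)
        fix j assume j: "j \<in> {..<n}"
        have "(SOME j'. j' < n \<and> xs!j' = xs!j) = j"
          using j xs(2) by (intro some_equality) (auto simp: n_def nth_eq_iff_index_eq)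
        thus "q (xs!j) * ((if z = xs!j then a else 0) + N (xs!j) z) = Q $$ (i,j) * M $$ (j,l)"
          using j l xs(2) by (auto simp: q_def M_entry n_def nth_eq_iff_index_eq)
      qed
      also have "\<dots> = (Q * M) $$ (i,l)"
        using Q(1) M i l by (simp add: scalar_prod_def lessThan_atLeast0)
      also have "\<dots> = (if z = x then 1 else 0)"
        using Q i l xs(2) by (auto simp: nth_eq_iff_index_eq n_def)
      finally show "(\<Sum>y\<in>A. q y * ((if z = y then a else 0) + N y z)) = (if z = x then 1 else 0)" .
    qed
  qed
  ultimately show ?thesis by blast
qed

no_notation Matrix.scalar_prod (infix "\<bullet>" 70)
no_notation Matrix.vec_index (infixl "$" 100)

subsection \<open>Polynomials\<close>

lemma lookup_pderiv_var:
  "Poly_Mapping.lookup (pderiv_var v p) \<beta> =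
     of_nat (Poly_Mapping.lookup \<beta> v + 1) * Poly_Mapping.lookup p (\<beta> + Poly_Mapping.single v 1)"
proof -
  let ?s = "Poly_Mapping.single v 1"
  have "{\<beta>. of_nat (Poly_Mapping.lookup \<beta> v + 1) * Poly_Mapping.lookup p (\<beta> + ?s) \<noteq> (0::complex)}
        \<subseteq> (\<lambda>\<gamma>. \<gamma> - ?s) ` {\<gamma>. Poly_Mapping.lookup p \<gamma> \<noteq> 0}"
  proof
    fix \<beta> assume "\<beta> \<in> {\<beta>. of_nat (Poly_Mapping.lookup \<beta> v + 1) * Poly_Mapping.lookup p (\<beta> + ?s) \<noteq> (0::complex)}"
    hence "Poly_Mapping.lookup p (\<beta> + ?s) \<noteq> 0" by auto
    moreover have "\<beta> = (\<beta> + ?s) - ?s" by simp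
    ultimately show "\<beta> \<in> (\<lambda>\<gamma>. \<gamma> - ?s) ` {\<gamma>. Poly_Mapping.lookup p \<gamma> \<noteq> 0}" by blast
  qed
  hence "finite {\<beta>. of_nat (Poly_Mapping.lookup \<beta> v + 1) * Poly_Mapping.lookup p (\<beta> + ?s) \<noteq> (0::complex)}"
    by (rule finite_subset) simp
  thus ?thesis unfolding pderiv_var_def by simp
qed

lemma pderiv_var_add: "pderiv_var v (p + q) = pderiv_var v p + pderiv_var v q"
  by (rule poly_mapping_eqI) (simp add: lookup_pderiv_var lookup_add distrib_left)

lemma pderiv_var_sum: "pderiv_var v (\<Sum>i\<in>S. p i) = (\<Sum>i\<in>S. pderiv_var v (p i))"
proof (induction S rule: infinite_finite_induct)
  case (infinite S)
  then show ?case by (simp add: poly_mapping_eqI lookup_pderiv_var)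
qed (simp_all add: pderiv_var_add poly_mapping_eqI lookup_pderiv_var)

lemma pderiv_var_single:
  "pderiv_var v (Poly_Mapping.single \<alpha> c) =
     Poly_Mapping.single (\<alpha> - Poly_Mapping.single v 1) (of_nat (Poly_Mapping.lookup \<alpha> v) * c)"
proof (rule poly_mapping_eqI)
  fix \<beta>
  consider "\<alpha> = \<beta> + Poly_Mapping.single v 1" | "Poly_Mapping.lookup \<alpha> v = 0"
    | "\<alpha> \<noteq> \<beta> + Poly_Mapping.single v 1" "\<alpha> - Poly_Mapping.single v 1 \<noteq> \<beta>"
  proof (cases "\<alpha> = \<beta> + Poly_Mapping.single v 1 \<or> Poly_Mapping.lookup \<alpha> v = 0")
    case False
    have "\<alpha> - Poly_Mapping.single v 1 \<noteq> \<beta>"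
    proof
      assume "\<alpha> - Poly_Mapping.single v 1 = \<beta>"
      hence "\<alpha> = \<beta> + Poly_Mapping.single v 1"
        using False by (auto intro!: poly_mapping_eqI simp: lookup_add lookup_minus lookup_single when_def)
      thus False using False by simp
    qed
    with False that show ?thesis by blast
  qed (use that in blast)+
  then show "Poly_Mapping.lookup (pderiv_var v (Poly_Mapping.single \<alpha> c)) \<beta> =
    Poly_Mapping.lookup (Poly_Mapping.single (\<alpha> - Poly_Mapping.single v 1) (of_nat (Poly_Mapping.lookup \<alpha> v) * c)) \<beta>"
    by cases (auto simp: lookup_pderiv_var lookup_add lookup_single when_def)
qed

lemma single_sum: "Poly_Mapping.single k (\<Sum>i\<in>S. f i) = (\<Sum>i\<in>S. Poly_Mapping.single k (f i))"
  by (induction S rule: infinite_finite_induct) (auto simp: single_add)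

lemma const_poly_0 [simp]: "const_poly 0 = 0"
  by (simp add: const_poly_def)

lemma const_poly_add: "const_poly (a + b) = const_poly a + const_poly b"
  by (simp add: const_poly_def single_add)

lemma const_poly_mult: "const_poly (a * b) = const_poly a * const_poly b"
  by (simp add: const_poly_def mult_single)

lemma const_poly_sum: "const_poly (\<Sum>i\<in>S. f i) = (\<Sum>i\<in>S. const_poly (f i))"
  by (simp add: const_poly_def single_sum)

lemma const_poly_mult_single: "const_poly c * Poly_Mapping.single k d = Poly_Mapping.single k (c * d)"
  by (simp add: const_poly_def mult_single)

lemma in_gen_ideal_sum:
  assumes "finite I" "\<And>i. i \<in> S \<Longrightarrow> in_gen_ideal I g (p i)"
  shows "in_gen_ideal I g (\<Sum>i\<in>S. p i)"
proof -
  have "\<forall>i\<in>S. \<exists>h. p i = (\<Sum>v\<in>I. h v * g v)"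
    using assms(2) by (simp add: in_gen_ideal_def)
  then obtain h where h: "\<forall>i\<in>S. p i = (\<Sum>v\<in>I. h i v * g v)" by metis
  have "(\<Sum>i\<in>S. p i) = (\<Sum>v\<in>I. (\<Sum>i\<in>S. h i v) * g v)"
    using h by (simp add: sum_distrib_right sum.swap[of _ S I])
  then show ?thesis unfolding in_gen_ideal_def by (intro exI[of _ "\<lambda>v. \<Sum>i\<in>S. h i v"]) simp
qed

lemma in_gen_ideal_mult:
  assumes "in_gen_ideal I g p"
  shows "in_gen_ideal I g (q * p)"
proof -
  from assms obtain h where "p = (\<Sum>v\<in>I. h v * g v)" unfolding in_gen_ideal_def by blast
  hence "q * p = (\<Sum>v\<in>I. (q * h v) * g v)" by (simp add: sum_distrib_left mult.assoc)
  then show ?thesis unfolding in_gen_ideal_def by (intro exI[of _ "\<lambda>v. q * h v"]) simp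
qed

lemma in_gen_ideal_generator:
  assumes "finite I" "u \<in> I"
  shows "in_gen_ideal I g (h * g u)"
proof -
  have "(\<Sum>v\<in>I. (if v = u then h else 0) * g v) = (\<Sum>v\<in>I. if v = u then h * g v else 0)"
    by (rule sum.cong) auto
  also have "\<dots> = h * g u" using assms by simp
  finally show ?thesis unfolding in_gen_ideal_def by (intro exI[of _ "\<lambda>v. if v = u then h else 0"]) simp
qed

lemma in_gen_ideal_eliminate:
  fixes m :: "'a \<Rightarrow> 'n zpoly" and M :: "'a \<Rightarrow> 'a \<Rightarrow> complex"
  assumes I: "finite I" and P: "finite P" "A \<subseteq> P" and C: "finite C" "P - A \<subseteq> C" and x: "x \<in> A"
    and rel: "\<And>y. y \<in> A \<Longrightarrow> in_gen_ideal I g (\<Sum>z\<in>P. const_poly (M y z) * m z)"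
    and inv: "\<And>z. z \<in> A \<Longrightarrow> (\<Sum>y\<in>A. q y * M y z) = (if z = x then 1 else 0)"
  shows "\<exists>c. in_gen_ideal I g (m x - (\<Sum>z\<in>C. const_poly (c z) * m z))"
proof -
  define s where "s z = (\<Sum>y\<in>A. q y * M y z)" for z
  define c where "c z = (if z \<in> P - A then - s z else 0)" for z
  have fA: "finite A" using P finite_subset by blast
  have "(\<Sum>y\<in>A. const_poly (q y) * (\<Sum>z\<in>P. const_poly (M y z) * m z)) = (\<Sum>z\<in>P. const_poly (s z) * m z)"
    by (simp add: s_def sum_distrib_left sum_distrib_right const_poly_sum const_poly_mult mult.assoc
        sum.swap[of _ A])
  also have "\<dots> = (\<Sum>z\<in>A. const_poly (s z) * m z) + (\<Sum>z\<in>P - A. const_poly (s z) * m z)"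
    using P by (simp add: sum.subset_diff[of A P] add.commute)
  also have "(\<Sum>z\<in>A. const_poly (s z) * m z) = (\<Sum>z\<in>A. if z = x then m z else 0)"
    using inv by (intro sum.cong) (auto simp: s_def const_poly_def)
  also have "\<dots> = m x" using fA x by simp
  also have "(\<Sum>z\<in>P - A. const_poly (s z) * m z) = - (\<Sum>z\<in>C. const_poly (c z) * m z)"
  proof -
    have "(\<Sum>z\<in>C. const_poly (c z) * m z) = (\<Sum>z\<in>P - A. const_poly (c z) * m z)"
      using C by (intro sum.mono_neutral_right) (auto simp: c_def const_poly_def)
    thus ?thesis by (simp add: c_def const_poly_def single_uminus sum_negf)
  qed
  finally have "(\<Sum>y\<in>A. const_poly (q y) * (\<Sum>z\<in>P. const_poly (M y z) * m z)) =
      m x - (\<Sum>z\<in>C. const_poly (c z) * m z)" by simp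
  moreover have "in_gen_ideal I g (\<Sum>y\<in>A. const_poly (q y) * (\<Sum>z\<in>P. const_poly (M y z) * m z))"
    by (rule in_gen_ideal_sum[OF I], rule in_gen_ideal_mult, rule rel)
  ultimately show ?thesis by auto
qed

lemma lattice_pt_add: "lattice_pt x \<Longrightarrow> lattice_pt y \<Longrightarrow> lattice_pt (x + y)"
  unfolding lattice_pt_def by (auto intro!: Ints_add)

lemma inner_lattice_pt_Ints: "lattice_pt x \<Longrightarrow> lattice_pt y \<Longrightarrow> x \<bullet> y \<in> \<int>"
  unfolding lattice_pt_def inner_vec_def by (auto intro!: Ints_sum Ints_mult simp: inner_real_def)

lemma floor_inner_add_lattice_pt:
  assumes "lattice_pt w" "lattice_pt v"
  shows "\<lfloor>(y + w) \<bullet> v\<rfloor> = \<lfloor>y \<bullet> v\<rfloor> + \<lfloor>w \<bullet> v\<rfloor>"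
proof -
  obtain m where "w \<bullet> v = of_int m" using inner_lattice_pt_Ints[OF assms] by (auto elim: Ints_cases)
  thus ?thesis by (simp add: inner_add_left)
qed

lemma finite_lattice_pts:
  fixes S :: "(real^'n) set"
  assumes "bounded S"
  shows "finite {x. lattice_pt x \<and> x \<in> S}"
proof -
  obtain r where r: "\<forall>x\<in>S. norm x \<le> r" using assms bounded_iff by blast
  define g where "g x = (\<lambda>i. \<lfloor>x $ i\<rfloor>)" for x :: "real^'n"
  have inj: "inj_on g {x. lattice_pt x \<and> x \<in> S}"
  proof (rule inj_onI)
    fix x y assume x: "x \<in> {x. lattice_pt x \<and> x \<in> S}" and y: "y \<in> {x. lattice_pt x \<and> x \<in> S}" and g: "g x = g y"
    show "x = y" unfolding Finite_Cartesian_Product.vec_eq_iff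
    proof
      fix i
      have "x $ i \<in> \<int>" "y $ i \<in> \<int>" using x y by (auto simp: lattice_pt_def)
      moreover have "\<lfloor>x $ i\<rfloor> = \<lfloor>y $ i\<rfloor>" using g by (metis g_def)
      ultimately show "x $ i = y $ i" by (metis floor_of_int Ints_cases)
    qed
  qed
  have "g ` {x. lattice_pt x \<and> x \<in> S} \<subseteq> PiE UNIV (\<lambda>_. {-\<lceil>r\<rceil>..\<lceil>r\<rceil>})"
  proof
    fix f assume "f \<in> g ` {x. lattice_pt x \<and> x \<in> S}"
    then obtain x where x: "x \<in> S" and f: "f = g x" by auto
    have "\<bar>x $ i\<bar> \<le> r" for i using r x component_le_norm_cart[of x i] by force
    have "\<lfloor>x $ i\<rfloor> \<in> {-\<lceil>r\<rceil>..\<lceil>r\<rceil>}" for i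
    proof -
      have a: "x $ i \<le> r" "-r \<le> x $ i" using \<open>\<bar>x $ i\<bar> \<le> r\<close> by auto
      have "\<lfloor>x $ i\<rfloor> \<le> \<lfloor>r\<rfloor>" using a(1) by (rule floor_mono)
      moreover have "\<lfloor>r\<rfloor> \<le> \<lceil>r\<rceil>" by (rule floor_le_ceiling)
      moreover have "\<lfloor>-r\<rfloor> \<le> \<lfloor>x $ i\<rfloor>" using a(2) by (rule floor_mono)
      moreover have "\<lfloor>-r\<rfloor> = -\<lceil>r\<rceil>" by (simp add: ceiling_def)
      ultimately have "\<lfloor>x $ i\<rfloor> \<le> \<lceil>r\<rceil> \<and> -\<lceil>r\<rceil> \<le> \<lfloor>x $ i\<rfloor>" by linarith
      thus ?thesis by simp
    qed
    thus "f \<in> PiE UNIV (\<lambda>_. {-\<lceil>r\<rceil>..\<lceil>r\<rceil>})" by (simp add: f g_def PiE_UNIV_domain)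
  qed
  hence "finite (g ` {x. lattice_pt x \<and> x \<in> S})" by (rule finite_subset) (simp add: finite_PiE)
  thus ?thesis using finite_image_iff[OF inj] by blast
qed

subsection \<open>Lattice polytopes and their duals\<close>

lemma lattice_polytope_vertices:
  assumes "lattice_polytope P"
  shows "finite (vertices P)" "\<And>v. v \<in> vertices P \<Longrightarrow> lattice_pt v" "convex hull (vertices P) = P"
proof -
  obtain S where S: "finite S" "\<forall>x\<in>S. lattice_pt x" "P = convex hull S"
    using assms unfolding lattice_polytope_def by blast
  have "vertices P \<subseteq> S" using S(3) extreme_point_of_convex_hull by (auto simp: vertices_def)
  thus "finite (vertices P)" "\<And>v. v \<in> vertices P \<Longrightarrow> lattice_pt v"
    using S finite_subset by blast+
  show "convex hull (vertices P) = P"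
    using Krein_Milman_polytope[OF S(1)] S(3) by (simp add: vertices_def)
qed

lemma vertices_subset: "vertices P \<subseteq> P"
  by (auto simp: vertices_def extreme_point_of_def)

lemma dual_polytope_convex_hull: "dual_polytope (convex hull S) = {y. \<forall>x\<in>S. y \<bullet> x \<ge> -1}"
proof -
  have "convex hull S \<subseteq> {x. -1 \<le> y \<bullet> x}" if "\<forall>x\<in>S. y \<bullet> x \<ge> -1" for y
    using that by (intro hull_minimal) (auto simp: convex_halfspace_ge)
  thus ?thesis by (auto simp: dual_polytope_def dest: hull_subset[THEN subsetD])
qed

lemma convex_dual_polytope: "convex (dual_polytope D)"
proof -
  have "dual_polytope D = (\<Inter>x\<in>D. {y. x \<bullet> y \<ge> -1})" by (auto simp: dual_polytope_def inner_commute)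
  thus ?thesis by (simp add: convex_INT convex_halfspace_ge)
qed

lemma zero_in_interior_dual_polytope:
  fixes D :: "(real^'n) set"
  assumes "bounded D"
  shows "0 \<in> interior (dual_polytope D)"
proof -
  obtain R where R: "R > 0" "\<And>x. x \<in> D \<Longrightarrow> norm x \<le> R" using assms bounded_pos by blast
  have "z \<bullet> x \<ge> -1" if z: "norm z < 1/R" and x: "x \<in> D" for z x
  proof -
    have "\<bar>z \<bullet> x\<bar> \<le> norm z * norm x" by (rule Cauchy_Schwarz_ineq2)
    also have "\<dots> \<le> (1/R) * R" using z R x by (intro mult_mono) auto
    finally show ?thesis using R by simp
  qed
  hence "ball 0 (1/R) \<subseteq> dual_polytope D" by (auto simp: dual_polytope_def)
  thus ?thesis unfolding mem_interior using R by (intro exI[of _ "1/R"]) auto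
qed

lemma hyperplane_eq_imp_normal_eq:
  fixes w1 w2 :: "'a::real_inner"
  assumes w1: "w1 \<noteq> 0" and H: "{x. w1 \<bullet> x = -1} = {x. w2 \<bullet> x = -1}"
  shows "w1 = w2"
proof -
  define c where "c = w1 \<bullet> w1"
  have c: "c > 0" using w1 by (simp add: c_def)
  define p where "p = (- 1 / c) *\<^sub>R w1"
  have p1: "w1 \<bullet> p = -1" using c by (simp add: p_def c_def)
  hence p2: "w2 \<bullet> p = -1" using H by blast
  have orth: "w2 \<bullet> t = 0" if "w1 \<bullet> t = 0" for t
  proof -
    have "w1 \<bullet> (p + t) = -1" using p1 that by (simp add: inner_add_right)
    hence "w2 \<bullet> (p + t) = -1" using H by blast
    thus ?thesis using p2 by (simp add: inner_add_right)
  qed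
  define l where "l = (w2 \<bullet> w1) / c"
  define t where "t = w2 - l *\<^sub>R w1"
  have "w1 \<bullet> t = 0" using c by (simp add: t_def l_def inner_diff_right c_def inner_commute)
  hence "w2 \<bullet> t = 0" by (rule orth)
  hence "t \<bullet> t = 0" using \<open>w1 \<bullet> t = 0\<close> by (simp add: t_def inner_diff_left inner_commute)
  hence "t = 0" by simp
  hence w2l: "w2 = l *\<^sub>R w1" by (simp add: t_def)
  have "l * (w1 \<bullet> p) = -1" using p2 by (simp add: w2l)
  hence "l = 1" using p1 by simp
  thus ?thesis using w2l by simp
qed

lemma tight_point_in_frontier_dual_polytope:
  assumes "v \<in> D" "y \<in> dual_polytope D" "y \<bullet> v = -1"
  shows "y \<in> frontier (dual_polytope D)"
proof -
  have v: "v \<noteq> 0" using assms(3) by auto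
  have "y \<notin> interior (dual_polytope D)"
  proof
    assume "y \<in> interior (dual_polytope D)"
    then obtain e where e: "e > 0" "ball y e \<subseteq> dual_polytope D" using mem_interior by blast
    define z where "z = y - (e / (2 * norm v)) *\<^sub>R v"
    have "dist y z = e / 2" using v e by (simp add: z_def dist_norm)
    hence "z \<in> dual_polytope D" using e by auto
    hence "z \<bullet> v \<ge> -1" using assms(1) by (auto simp: dual_polytope_def)
    moreover have "z \<bullet> v = -1 - e * norm v / 2"
      using v assms(3) by (simp add: z_def inner_diff_left dot_square_norm power2_eq_square)
    moreover have "e * norm v / 2 > 0" using e v by simp
    ultimately show False by linarith
  qed
  thus ?thesis using assms(2) closure_subset by (auto simp: frontier_def)
qed

lemma affine_hull_facet_dual_polytope:
  fixes D :: "(real^'n) set"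
  assumes int: "interior (dual_polytope D) \<noteq> {}" and F: "F facet_of dual_polytope D"
    and y: "y \<in> rel_interior F" and v: "v \<in> D" "y \<bullet> v = -1"
  shows "affine hull F = {x. v \<bullet> x = -1}"
proof -
  let ?Ds = "dual_polytope D"
  have FDs: "F \<subseteq> ?Ds" using F facet_of_imp_subset by blast
  have "?Ds \<inter> {x. (-v) \<bullet> x = 1} face_of ?Ds"
    using v(1) by (intro face_of_Int_supporting_hyperplane_le convex_dual_polytope)
      (auto simp: dual_polytope_def inner_commute)
  moreover have "y \<in> ?Ds \<inter> {x. (-v) \<bullet> x = 1}"
    using y rel_interior_subset FDs v(2) by (auto simp: inner_commute)
  ultimately have "F \<subseteq> ?Ds \<inter> {x. (-v) \<bullet> x = 1}"
    using subset_of_face_of[OF _ FDs] y by blast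
  hence sub: "F \<subseteq> {x. v \<bullet> x = -1}" by auto
  have v0: "v \<noteq> 0" using v(2) by auto
  have "aff_dim F = aff_dim ?Ds - 1" using F by (simp add: facet_of_def)
  also have "aff_dim ?Ds = int DIM(real^'n)" using aff_dim_nonempty_interior[OF int] by simp
  also have "int DIM(real^'n) - 1 = aff_dim {x. v \<bullet> x = -1}" using v0 by simp
  finally have "aff_dim F = aff_dim {x. v \<bullet> x = -1}" .
  hence "affine hull F = affine hull {x. v \<bullet> x = -1}" using aff_dim_eq_full_gen[OF sub] by blast
  thus ?thesis by (simp add: affine_hyperplane)
qed

lemma doubly_tight_in_low_boundary_pts:
  fixes D :: "(real^'n) set"
  assumes int: "interior (dual_polytope D) \<noteq> {}"
    and v: "v1 \<in> D" "v2 \<in> D" "v1 \<noteq> v2"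
    and y: "lattice_pt y" "y \<in> dual_polytope D" "y \<bullet> v1 = -1" "y \<bullet> v2 = -1"
  shows "y \<in> low_boundary_pts D"
proof -
  have "y \<notin> rel_interior F" if F: "F facet_of dual_polytope D" for F
  proof
    assume yF: "y \<in> rel_interior F"
    have "{x. v1 \<bullet> x = -1} = {x. v2 \<bullet> x = -1}"
      using affine_hull_facet_dual_polytope[OF int F yF v(1) y(3)]
        affine_hull_facet_dual_polytope[OF int F yF v(2) y(4)] by simp
    moreover have "v1 \<noteq> 0" using y(3) by auto
    ultimately show False using hyperplane_eq_imp_normal_eq v(3) by blast
  qed
  thus ?thesis
    using tight_point_in_frontier_dual_polytope[OF v(1) y(2,3)] y(1)
    unfolding low_boundary_pts_def by blast
qed

lemma lookup_expo:
  assumes "finite (vertices D)"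
  shows "Poly_Mapping.lookup (expo D y) v = (if v \<in> vertices D then nat (\<lfloor>y \<bullet> v\<rfloor> + 1) else 0)"
proof -
  have "finite {v. (if v \<in> vertices D then nat (\<lfloor>y \<bullet> v\<rfloor> + 1) else 0) \<noteq> 0}"
    by (rule finite_subset[OF _ assms]) auto
  thus ?thesis unfolding expo_def by simp
qed

lemma pderiv_var_single_expo:
  assumes "finite (vertices D)" "u \<in> vertices D" "w \<bullet> u \<ge> -1"
  shows "pderiv_var u (Poly_Mapping.single (expo D w) c) =
    Poly_Mapping.single (expo D w - Poly_Mapping.single u 1) (of_int (\<lfloor>w \<bullet> u\<rfloor> + 1) * c)"
proof -
  have "\<lfloor>w \<bullet> u\<rfloor> \<ge> -1" using assms(3) by (simp add: le_floor_iff)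
  thus ?thesis using assms(1,2) by (simp add: pderiv_var_single lookup_expo)
qed

text \<open>The exponent of \<open>\<zeta>\<^sup>y / \<Prod>\<^sub>v\<^sub>\<noteq>\<^sub>u \<zeta>\<^sub>v\<close>.\<close>

definition cofactor_expo :: "(real^'n) set \<Rightarrow> real^'n \<Rightarrow> real^'n \<Rightarrow> (real^'n) \<Rightarrow>\<^sub>0 nat" where
  "cofactor_expo D u y =
     Abs_poly_mapping (\<lambda>v. if v \<in> vertices D then nat (\<lfloor>y \<bullet> v\<rfloor> + (if v = u then 1 else 0)) else 0)"

lemma lookup_cofactor_expo:
  assumes "finite (vertices D)"
  shows "Poly_Mapping.lookup (cofactor_expo D u y) v =
    (if v \<in> vertices D then nat (\<lfloor>y \<bullet> v\<rfloor> + (if v = u then 1 else 0)) else 0)"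
proof -
  have "finite {v. (if v \<in> vertices D then nat (\<lfloor>y \<bullet> v\<rfloor> + (if v = u then 1 else 0)) else 0) \<noteq> 0}"
    by (rule finite_subset[OF _ assms]) auto
  thus ?thesis unfolding cofactor_expo_def by simp
qed

subsection \<open>Reflexive polytopes\<close>

locale reflexive_pair =
  fixes D :: "(real^'n) set"
  assumes reflexive: "reflexive_polytope D"
begin

abbreviation "Ds \<equiv> dual_polytope D"
abbreviation "V \<equiv> vertices D"
abbreviation "W \<equiv> vertices Ds"
abbreviation "P \<equiv> {y. lattice_pt y \<and> y \<in> Ds}"

lemma lattice_polytope_D: "lattice_polytope D"
  and lattice_polytope_Ds: "lattice_polytope Ds"
  and zero_in_interior_D: "0 \<in> interior D"
  using reflexive by (simp_all add: reflexive_polytope_def)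

lemmas finite_V = lattice_polytope_vertices(1)[OF lattice_polytope_D]
  and lattice_V = lattice_polytope_vertices(2)[OF lattice_polytope_D]
  and lattice_W = lattice_polytope_vertices(2)[OF lattice_polytope_Ds]

lemma mem_Ds_iff: "y \<in> Ds \<longleftrightarrow> (\<forall>v\<in>V. y \<bullet> v \<ge> -1)"
  using dual_polytope_convex_hull[of V] by (simp add: lattice_polytope_vertices(3)[OF lattice_polytope_D])

lemma W_V: "w \<in> W \<Longrightarrow> v \<in> V \<Longrightarrow> w \<bullet> v \<ge> -1"
  using vertices_subset mem_Ds_iff by blast

lemma V_nonempty: "V \<noteq> {}"
  using zero_in_interior_D interior_subset lattice_polytope_vertices(3)[OF lattice_polytope_D] by force

lemma compact_Ds: "compact Ds"
  using lattice_polytope_Ds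
  by (auto simp: lattice_polytope_def compact_convex_hull finite_imp_compact)

lemma interior_Ds_nonempty: "interior Ds \<noteq> {}"
proof -
  have "bounded D"
    using lattice_polytope_D
    by (auto simp: lattice_polytope_def compact_convex_hull finite_imp_compact compact_imp_bounded)
  thus ?thesis using zero_in_interior_dual_polytope by blast
qed

lemma finite_P: "finite P"
  using finite_lattice_pts[OF compact_imp_bounded[OF compact_Ds]] by simp

lemma finite_low_boundary_pts: "finite (low_boundary_pts D)"
proof -
  have "low_boundary_pts D \<subseteq> P"
    using frontier_subset_closed[OF compact_imp_closed[OF compact_Ds]]
    by (auto simp: low_boundary_pts_def)
  thus ?thesis using finite_P finite_subset by blast
qed

definition simple_pts :: "(real^'n) set" where
  "simple_pts = {y \<in> P. \<not> (\<exists>v1\<in>V. \<exists>v2\<in>V. v1 \<noteq> v2 \<and> y \<bullet> v1 = -1 \<and> y \<bullet> v2 = -1)}"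

lemma simple_pts_subset: "simple_pts \<subseteq> P"
  by (auto simp: simple_pts_def)

lemma non_simple_pts_low: "P - simple_pts \<subseteq> low_boundary_pts D"
proof
  fix y assume "y \<in> P - simple_pts"
  then obtain v1 v2 where "v1 \<in> V" "v2 \<in> V" "v1 \<noteq> v2" "y \<bullet> v1 = -1" "y \<bullet> v2 = -1" "y \<in> P"
    by (auto simp: simple_pts_def)
  thus "y \<in> low_boundary_pts D"
    using doubly_tight_in_low_boundary_pts[OF interior_Ds_nonempty] vertices_subset by blast
qed

lemma facet_interior_in_simple_pts:
  assumes "lattice_pt x" "F facet_of Ds" "x \<in> rel_interior F"
  shows "x \<in> simple_pts"
proof -
  have "x \<in> Ds" using assms(2,3) rel_interior_subset facet_of_imp_subset by blast
  moreover have "x \<notin> low_boundary_pts D" using assms(2,3) by (auto simp: low_boundary_pts_def)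
  ultimately show ?thesis using assms(1) non_simple_pts_low by blast
qed

lemma single_tight_vertex:
  assumes y: "y \<in> simple_pts"
  shows "\<exists>u\<in>V. \<forall>v\<in>V. v \<noteq> u \<longrightarrow> y \<bullet> v \<ge> 0"
proof -
  have nonneg: "y \<bullet> v \<ge> 0" if v: "v \<in> V" "y \<bullet> v \<noteq> -1" for v
  proof -
    obtain k where k: "y \<bullet> v = of_int k"
      using inner_lattice_pt_Ints[of y v] y lattice_V v by (auto simp: simple_pts_def elim: Ints_cases)
    have "of_int k \<ge> (-1::real)" using y v k mem_Ds_iff by (auto simp: simple_pts_def)
    thus ?thesis using k v(2) by simp
  qed
  show ?thesis
  proof (cases "\<exists>u\<in>V. y \<bullet> u = -1")
    case True
    then obtain u where u: "u \<in> V" "y \<bullet> u = -1" by blast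
    have "y \<bullet> v \<ge> 0" if "v \<in> V" "v \<noteq> u" for v
      using nonneg[OF that(1)] y u that by (auto simp: simple_pts_def)
    thus ?thesis using u by blast
  next
    case False
    thus ?thesis using nonneg V_nonempty by blast
  qed
qed

definition tight_vertex :: "real^'n \<Rightarrow> real^'n" where
  "tight_vertex y = (SOME u. u \<in> V \<and> (\<forall>v\<in>V. v \<noteq> u \<longrightarrow> y \<bullet> v \<ge> 0))"

lemma tight_vertex:
  assumes "y \<in> simple_pts"
  shows "tight_vertex y \<in> V" and "\<And>v. v \<in> V \<Longrightarrow> v \<noteq> tight_vertex y \<Longrightarrow> y \<bullet> v \<ge> 0"
proof -
  have "\<exists>u. u \<in> V \<and> (\<forall>v\<in>V. v \<noteq> u \<longrightarrow> y \<bullet> v \<ge> 0)" using single_tight_vertex[OF assms] by blast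
  hence "tight_vertex y \<in> V \<and> (\<forall>v\<in>V. v \<noteq> tight_vertex y \<longrightarrow> y \<bullet> v \<ge> 0)"
    unfolding tight_vertex_def by (rule someI_ex)
  thus "tight_vertex y \<in> V" "\<And>v. v \<in> V \<Longrightarrow> v \<noteq> tight_vertex y \<Longrightarrow> y \<bullet> v \<ge> 0" by auto
qed

text \<open>Behind this: \<open>\<zeta>\<^sup>y \<zeta>\<^sup>w = \<zeta>\<^sup>y\<^sup>+\<^sup>w \<Prod>\<^sub>v \<zeta>\<^sub>v\<close> for lattice points y and w.\<close>

lemma cofactor_expo_add:
  assumes w: "lattice_pt w" "\<And>v. v \<in> V \<Longrightarrow> w \<bullet> v \<ge> -1" "w \<bullet> u \<ge> 0"
    and y: "y \<in> Ds" and u: "u \<in> V" and pos: "\<And>v. v \<in> V \<Longrightarrow> v \<noteq> u \<Longrightarrow> y \<bullet> v \<ge> 0"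
  shows "cofactor_expo D u y + (expo D w - Poly_Mapping.single u 1) = expo D (y + w)"
proof (rule poly_mapping_eqI)
  fix v
  let ?lhs = "cofactor_expo D u y + (expo D w - Poly_Mapping.single u 1)"
  show "Poly_Mapping.lookup ?lhs v = Poly_Mapping.lookup (expo D (y + w)) v"
  proof (cases "v \<in> V")
    case v: True
    have floor_add: "\<lfloor>(y + w) \<bullet> v\<rfloor> = \<lfloor>y \<bullet> v\<rfloor> + \<lfloor>w \<bullet> v\<rfloor>"
      using floor_inner_add_lattice_pt w(1) lattice_V v by blast
    have "\<lfloor>y \<bullet> v\<rfloor> \<ge> -1" "\<lfloor>w \<bullet> v\<rfloor> \<ge> -1"
      using y w(2) v by (auto simp: mem_Ds_iff le_floor_iff)
    show ?thesis
    proof (cases "v = u")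
      case True
      have "\<lfloor>w \<bullet> v\<rfloor> \<ge> 0" using w(3) True by (simp add: le_floor_iff)
      have "Poly_Mapping.lookup ?lhs v = nat (\<lfloor>y \<bullet> v\<rfloor> + 1) + (nat (\<lfloor>w \<bullet> v\<rfloor> + 1) - 1)"
        using v True by (simp add: lookup_add lookup_minus lookup_single lookup_expo lookup_cofactor_expo finite_V)
      also have "\<dots> = nat (\<lfloor>(y + w) \<bullet> v\<rfloor> + 1)"
        using floor_add \<open>\<lfloor>y \<bullet> v\<rfloor> \<ge> -1\<close> \<open>\<lfloor>w \<bullet> v\<rfloor> \<ge> 0\<close> by arith
      finally show ?thesis using v by (simp add: lookup_expo finite_V)
    next
      case False
      have "\<lfloor>y \<bullet> v\<rfloor> \<ge> 0" using pos v False by (simp add: le_floor_iff)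
      have "Poly_Mapping.lookup ?lhs v = nat \<lfloor>y \<bullet> v\<rfloor> + nat (\<lfloor>w \<bullet> v\<rfloor> + 1)"
        using v False by (simp add: lookup_add lookup_minus lookup_single lookup_expo lookup_cofactor_expo
            finite_V when_def)
      also have "\<dots> = nat (\<lfloor>(y + w) \<bullet> v\<rfloor> + 1)"
        using floor_add \<open>\<lfloor>y \<bullet> v\<rfloor> \<ge> 0\<close> \<open>\<lfloor>w \<bullet> v\<rfloor> \<ge> -1\<close> by arith
      finally show ?thesis using v by (simp add: lookup_expo finite_V)
    qed
  next
    case False
    then show ?thesis using u
      by (simp add: lookup_add lookup_minus lookup_single lookup_expo lookup_cofactor_expo finite_V when_def)
  qed
qed

lemma cofactor_times_pderiv_fpoly:
  assumes y: "lattice_pt y" "y \<in> Ds" and u: "u \<in> V" and pos: "\<And>v. v \<in> V \<Longrightarrow> v \<noteq> u \<Longrightarrow> y \<bullet> v \<ge> 0"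
  shows "Poly_Mapping.single (cofactor_expo D u y) 1 * pderiv_var u (fpoly D a) =
    const_poly a * zmono D y + (\<Sum>w\<in>W. const_poly (of_int (\<lfloor>w \<bullet> u\<rfloor> + 1)) * zmono D (y + w))"
proof -
  let ?m = "Poly_Mapping.single (cofactor_expo D u y) (1::complex)"
  have shift: "?m * pderiv_var u (Poly_Mapping.single (expo D w) c) =
      const_poly (of_int (\<lfloor>w \<bullet> u\<rfloor> + 1) * c) * zmono D (y + w)"
    if w: "lattice_pt w" "\<And>v. v \<in> V \<Longrightarrow> w \<bullet> v \<ge> -1" for w c
  proof (cases "w \<bullet> u \<ge> 0")
    case True
    then show ?thesis
      using cofactor_expo_add[OF w True y(2) u pos] pderiv_var_single_expo[OF finite_V u w(2)[OF u]]
      by (simp add: mult_single zmono_def const_poly_mult_single)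
  next
    case False
    hence "\<lfloor>w \<bullet> u\<rfloor> = -1" using w(2)[OF u] by (simp add: floor_eq_iff)
    then show ?thesis using pderiv_var_single_expo[OF finite_V u w(2)[OF u]] by (simp add: const_poly_def)
  qed
  have fpoly: "fpoly D a = (\<Sum>w\<in>W. Poly_Mapping.single (expo D w) 1) + Poly_Mapping.single (expo D 0) a"
    by (simp add: fpoly_def zmono_def const_poly_mult_single)
  have "(\<Sum>w\<in>W. ?m * pderiv_var u (Poly_Mapping.single (expo D w) 1)) =
      (\<Sum>w\<in>W. const_poly (of_int (\<lfloor>w \<bullet> u\<rfloor> + 1)) * zmono D (y + w))"
    by (rule sum.cong) (simp_all add: shift lattice_W W_V)
  moreover have "?m * pderiv_var u (Poly_Mapping.single (expo D 0) a) = const_poly a * zmono D y"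
    using shift[of 0 a] by (simp add: lattice_pt_def)
  ultimately show ?thesis
    unfolding fpoly pderiv_var_add pderiv_var_sum distrib_left sum_distrib_left by (simp add: add.commute)
qed

lemma jacobian_relation:
  assumes y: "y \<in> P" and u: "u \<in> V" and pos: "\<And>v. v \<in> V \<Longrightarrow> v \<noteq> u \<Longrightarrow> y \<bullet> v \<ge> 0"
  shows "jacobian_ideal_mem D a (\<Sum>z\<in>P. const_poly ((if z = y then a else 0) +
           (\<Sum>w\<in>W. if z = y + w then of_int (\<lfloor>w \<bullet> u\<rfloor> + 1) else 0)) * zmono D z)"
proof -
  let ?k = "\<lambda>w. of_int (\<lfloor>w \<bullet> u\<rfloor> + 1) :: complex"
  have shift_in_P: "y + w \<in> P" if w: "w \<in> W" "?k w \<noteq> 0" for w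
  proof -
    have "\<lfloor>w \<bullet> u\<rfloor> \<noteq> -1" using w(2) by auto
    moreover have "\<lfloor>w \<bullet> u\<rfloor> \<ge> -1" using W_V[OF w(1) u] by (simp add: le_floor_iff)
    ultimately have "\<lfloor>w \<bullet> u\<rfloor> \<ge> 0" by linarith
    hence "w \<bullet> u \<ge> 0" by simp
    hence "(y + w) \<bullet> v \<ge> -1" if "v \<in> V" for v
      using that y pos[of v] W_V[OF w(1) that] by (cases "v = u") (auto simp: inner_add_left mem_Ds_iff)
    thus ?thesis using y lattice_W w lattice_pt_add by (auto simp: mem_Ds_iff)
  qed
  have "(\<Sum>z\<in>P. const_poly (if z = y then a else 0) * zmono D z) = (\<Sum>z\<in>P. if z = y then const_poly a * zmono D z else 0)"
    by (rule sum.cong) auto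
  also have "\<dots> = const_poly a * zmono D y" using y finite_P by simp
  finally have sum_y: "(\<Sum>z\<in>P. const_poly (if z = y then a else 0) * zmono D z) = const_poly a * zmono D y" .
  have "(\<Sum>z\<in>P. const_poly (\<Sum>w\<in>W. if z = y + w then ?k w else 0) * zmono D z)
      = (\<Sum>z\<in>P. \<Sum>w\<in>W. if z = y + w then const_poly (?k w) * zmono D (y + w) else 0)"
    unfolding const_poly_sum sum_distrib_right by (intro sum.cong refl) auto
  also have "\<dots> = (\<Sum>w\<in>W. \<Sum>z\<in>P. if z = y + w then const_poly (?k w) * zmono D (y + w) else 0)"
    by (rule sum.swap)
  also have "\<dots> = (\<Sum>w\<in>W. const_poly (?k w) * zmono D (y + w))"
  proof (rule sum.cong)
    fix w assume "w \<in> W"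
    then show "(\<Sum>z\<in>P. if z = y + w then const_poly (?k w) * zmono D (y + w) else 0) =
        const_poly (?k w) * zmono D (y + w)"
      using shift_in_P[of w] finite_P by (cases "?k w = 0") auto
  qed simp
  finally have sum_w: "(\<Sum>z\<in>P. const_poly (\<Sum>w\<in>W. if z = y + w then ?k w else 0) * zmono D z)
      = (\<Sum>w\<in>W. const_poly (?k w) * zmono D (y + w))" .
  have "(\<Sum>z\<in>P. const_poly ((if z = y then a else 0) +
           (\<Sum>w\<in>W. if z = y + w then ?k w else 0)) * zmono D z) =
      Poly_Mapping.single (cofactor_expo D u y) 1 * pderiv_var u (fpoly D a)"
    using y sum_y sum_w
    by (simp add: cofactor_times_pderiv_fpoly[OF _ _ u pos] const_poly_add distrib_right sum.distrib)
  thus ?thesis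
    using in_gen_ideal_generator[OF finite_V u, of "\<lambda>v. pderiv_var v (fpoly D a)"]
    by (simp add: jacobian_ideal_mem_def)
qed

definition jacobian_coeff :: "real^'n \<Rightarrow> real^'n \<Rightarrow> complex" where
  "jacobian_coeff y z = (\<Sum>w\<in>W. if z = y + w then of_int (\<lfloor>w \<bullet> tight_vertex y\<rfloor> + 1) else 0)"

lemma jacobian_relation_simple:
  assumes "y \<in> simple_pts"
  shows "jacobian_ideal_mem D a
    (\<Sum>z\<in>P. const_poly ((if z = y then a else 0) + jacobian_coeff y z) * zmono D z)"
proof -
  have "y \<in> P" using assms simple_pts_subset by blast
  from jacobian_relation[OF this tight_vertex[OF assms]] show ?thesis
    unfolding jacobian_coeff_def .
qed

end

theorem lemma3p1:
  fixes D :: "(real^'n) set"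
  assumes "reflexive_polytope D"
  shows "\<exists>E :: complex set. finite E \<and>
    (\<forall>a. a \<notin> E \<longrightarrow>
      (\<forall>x. lattice_pt x \<and> (\<exists>F. F facet_of dual_polytope D \<and> x \<in> rel_interior F) \<longrightarrow>
        (\<exists>c :: real^'n \<Rightarrow> complex.
           jacobian_ideal_mem D a
             (zmono D x - (\<Sum>y\<in>low_boundary_pts D. const_poly (c y) * zmono D y)))))"
proof -
  interpret reflexive_pair D by standard fact
  have "finite simple_pts" using finite_P simple_pts_subset finite_subset by blast
  then obtain E where "finite E" and E: "\<And>a x. a \<notin> E \<Longrightarrow> x \<in> simple_pts \<Longrightarrow> \<exists>q. \<forall>z\<in>simple_pts.
      (\<Sum>y\<in>simple_pts. q y * ((if z = y then a else 0) + jacobian_coeff y z)) = (if z = x then 1 else 0)"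
    using shifted_matrix_invertible_cofinite[of simple_pts jacobian_coeff] by blast
  have "\<exists>c. jacobian_ideal_mem D a (zmono D x - (\<Sum>y\<in>low_boundary_pts D. const_poly (c y) * zmono D y))"
    if "a \<notin> E" and x: "lattice_pt x" "F facet_of Ds" "x \<in> rel_interior F" for a x F
  proof -
    have "x \<in> simple_pts" using facet_interior_in_simple_pts[OF x] .
    with E[OF \<open>a \<notin> E\<close>] obtain q where "\<And>z. z \<in> simple_pts \<Longrightarrow>
        (\<Sum>y\<in>simple_pts. q y * ((if z = y then a else 0) + jacobian_coeff y z)) = (if z = x then 1 else 0)"
      by blast
    from in_gen_ideal_eliminate[OF finite_V finite_P simple_pts_subset finite_low_boundary_pts
        non_simple_pts_low \<open>x \<in> simple_pts\<close> jacobian_relation_simple[unfolded jacobian_ideal_mem_def] this]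
    show ?thesis unfolding jacobian_ideal_mem_def .
  qed
  thus ?thesis using \<open>finite E\<close> by blast
qed

end
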